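(* Let $p$ be a prime, $q$ a power of $p$, $U\in\mathcal A_m^*$, $\sigma:\mathcal A_m\to\mathcal A_m^*$ a $p$-uniform morphism and $\varphi:\mathcal A_m\to\mathbb{F}_q$ a coding. Let $t\in\mathbb{N}^*$, $r=p^t$, and $\alpha\in\mathbb{F}_r$ (with $\mathbb{F}_q$ and $\mathbb{F}_r$ inside a common algebraic closure of $\mathbb{F}_p$). Then the sequence $\big(P_{\varphi(\sigma^n(U))}(\alpha)\big)_{n\ge0}$ is ultimately periodic.
   Context: $\mathcal A_m=\{0,\dots,m-1\}$. A $p$-uniform morphism sends each letter to a word of length $p$ and acts on words by concatenation; a coding is a letter-to-letter map applied letterwise. For a word $W=w_0\cdots w_{s-1}$ over $\mathbb{F}_q$, $P_W(T)=\sum_{j=0}^{s-1}w_{s-1-j}T^j\in\mathbb{F}_q[T]$. *)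

theory Defs
  imports "HOL-Computational_Algebra.Polynomial"
begin

text \<open>Words over A_m are lists of naturals with all letters below m.
  A morphism sigma acts on words by concatenation.\<close>
definition apply_morphism :: "(nat \<Rightarrow> nat list) \<Rightarrow> nat list \<Rightarrow> nat list" where
  "apply_morphism \<sigma> w = concat (map \<sigma> w)"

definition p_uniform_morphism :: "nat \<Rightarrow> nat \<Rightarrow> (nat \<Rightarrow> nat list) \<Rightarrow> bool" where
  "p_uniform_morphism m p \<sigma> \<longleftrightarrow>
     (\<forall>a<m. length (\<sigma> a) = p \<and> set (\<sigma> a) \<subseteq> {..<m})"

text \<open>P_W(T) = sum_j w_{s-1-j} T^j, i.e. the coefficient list is the reversed word.\<close>
definition word_poly :: "'a::comm_semiring_0 list \<Rightarrow> 'a poly" where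
  "word_poly W = Poly (rev W)"

definition ultimately_periodic :: "(nat \<Rightarrow> 'a) \<Rightarrow> bool" where
  "ultimately_periodic f \<longleftrightarrow> (\<exists>N k. k > 0 \<and> (\<forall>n\<ge>N. f (n + k) = f n))"

end

theory Submission
  imports Defs "HOL-Computational_Algebra.Primes"
begin

text \<open>Let \<open>c\<^sub>n(a)\<close> be the value at \<open>\<alpha>\<close> of the polynomial of \<open>\<phi>(\<sigma>\<^sup>n(a))\<close>. Since \<open>\<sigma>\<^sup>n\<close> maps
  every letter to a block of length \<open>p\<^sup>n\<close>, the value for a word \<open>w\<close> is the polynomial of
  \<open>c\<^sub>n(w)\<close> evaluated at \<open>\<alpha>^(p\<^sup>n)\<close>. Hence \<open>c\<^sub>n\<^sub>+\<^sub>1\<close> is a fixed function of \<open>c\<^sub>n\<close> and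
  \<open>\<alpha>^(p\<^sup>n)\<close>, and \<open>\<alpha>^(p\<^sup>n\<^sup>+\<^sup>1) = (\<alpha>^(p\<^sup>n))\<^sup>p\<close>. All these values lie in the finite field
  \<open>{x. x^M = x}\<close> with \<open>M = p^(et)\<close>, so the pair \<open>(c\<^sub>n, \<alpha>^(p\<^sup>n))\<close> iterates a fixed map
  on a finite set and is ultimately periodic.\<close>

lemma funpow_apply_morphism_append:
  "(apply_morphism \<sigma> ^^ n) (xs @ ys) = (apply_morphism \<sigma> ^^ n) xs @ (apply_morphism \<sigma> ^^ n) ys"
  by (induct n) (auto simp: apply_morphism_def)

lemma funpow_apply_morphism_Nil [simp]: "(apply_morphism \<sigma> ^^ n) [] = []"
  by (induct n) (auto simp: apply_morphism_def)

lemma funpow_apply_morphism_eq_concat: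
  "(apply_morphism \<sigma> ^^ n) w = concat (map (\<lambda>a. (apply_morphism \<sigma> ^^ n) [a]) w)"
proof (induct w)
  case (Cons a w)
  then show ?case
    using funpow_apply_morphism_append[where xs = "[a]" and ys = w] by simp
qed simp

lemma funpow_apply_morphism_Suc_singleton:
  "(apply_morphism \<sigma> ^^ Suc n) [a] = (apply_morphism \<sigma> ^^ n) (\<sigma> a)"
  by (simp add: funpow_Suc_right apply_morphism_def del: funpow.simps)

lemma set_funpow_apply_morphism:
  assumes "p_uniform_morphism m p \<sigma>" "set w \<subseteq> {..<m}"
  shows "set ((apply_morphism \<sigma> ^^ n) w) \<subseteq> {..<m}"
  using assms by (induct n) (auto simp: apply_morphism_def p_uniform_morphism_def)

lemma length_funpow_apply_morphism:
  assumes "p_uniform_morphism m p \<sigma>" "set w \<subseteq> {..<m}"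
  shows "length ((apply_morphism \<sigma> ^^ n) w) = p ^ n * length w"
  using assms(2)
proof (induct n arbitrary: w)
  case (Suc n)
  have "length (apply_morphism \<sigma> w) = p * length w"
    using assms(1) Suc.prems
    by (induct w) (auto simp: apply_morphism_def p_uniform_morphism_def)
  moreover have "set (apply_morphism \<sigma> w) \<subseteq> {..<m}"
    using set_funpow_apply_morphism[OF assms(1) Suc.prems, of 1] by simp
  ultimately show ?case
    using Suc.hyps by (simp add: funpow_Suc_right del: funpow.simps)
qed simp

lemma poly_word_poly_append:
  "poly (word_poly (xs @ ys)) x = poly (word_poly xs) x * x ^ length ys + poly (word_poly ys) x"
  for x :: "'a::comm_ring_1"
  by (simp add: word_poly_def Poly_append poly_monom)

lemma poly_word_poly_Cons:
  "poly (word_poly (a # ys)) x = a * x ^ length ys + poly (word_poly ys) x"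
  for x :: "'a::comm_ring_1"
  using poly_word_poly_append[of "[a]" ys x] by (simp add: word_poly_def)

lemma poly_word_poly_concat_uniform:
  fixes x :: "'a::comm_ring_1"
  assumes "\<forall>v\<in>set vs. length v = L"
  shows "poly (word_poly (concat vs)) x
           = poly (word_poly (map (\<lambda>v. poly (word_poly v) x) vs)) (x ^ L)"
  using assms
proof (induct vs)
  case (Cons v vs)
  have "length (concat vs) = L * length vs"
    using Cons.prems by (induct vs) auto
  then show ?case
    using Cons by (simp add: poly_word_poly_append poly_word_poly_Cons power_mult)
qed (simp add: word_poly_def)

lemma poly_word_poly_funpow_apply_morphism:
  fixes \<phi> :: "nat \<Rightarrow> 'a::comm_ring_1"
  assumes "p_uniform_morphism m p \<sigma>" "set w \<subseteq> {..<m}"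
  shows "poly (word_poly (map \<phi> ((apply_morphism \<sigma> ^^ n) w))) x
           = poly (word_poly (map (\<lambda>a. poly (word_poly (map \<phi> ((apply_morphism \<sigma> ^^ n) [a]))) x) w))
                  (x ^ p ^ n)"
proof -
  have "\<forall>v\<in>set (map (\<lambda>a. map \<phi> ((apply_morphism \<sigma> ^^ n) [a])) w). length v = p ^ n"
    using assms length_funpow_apply_morphism[OF assms(1), of "[_]"] by auto
  from poly_word_poly_concat_uniform[OF this, of x] show ?thesis
    by (subst funpow_apply_morphism_eq_concat) (simp add: map_concat comp_def)
qed

lemma poly_word_poly_closed:
  assumes "0 \<in> S" "\<And>x y. x \<in> S \<Longrightarrow> y \<in> S \<Longrightarrow> x + y \<in> S"
    "\<And>x y. x \<in> S \<Longrightarrow> y \<in> S \<Longrightarrow> x * y \<in> S" "set cs \<subseteq> S" "x \<in> S"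
  shows "poly (word_poly cs) x \<in> S"
proof -
  have "poly (Poly ds) x \<in> S" if "set ds \<subseteq> S" for ds
    using that by (induct ds) (auto intro: assms)
  then show ?thesis
    using assms(4) by (simp add: word_poly_def)
qed

lemma ultimately_periodic_orbit:
  assumes "finite A" "\<And>n. s n \<in> A" "\<And>n. s (Suc n) = F (s n)"
  shows "ultimately_periodic s"
proof -
  have "\<not> inj s"
    using assms(1,2) finite_subset[of "range s" A] finite_imageD[of s UNIV] by auto
  then obtain i j where "i \<noteq> j" "s i = s j"
    unfolding inj_def by blast
  then obtain i j where "i < j" "s i = s j"
    by (metis linorder_neqE_nat)
  have "s (n + (j - i)) = s n" if "i \<le> n" for n
    using that
  proof (induct n rule: dec_induct)
    case (step n)
    then show ?case using assms(3) by (metis add_Suc)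
  qed (use \<open>i < j\<close> \<open>s i = s j\<close> in simp)
  then show ?thesis
    unfolding ultimately_periodic_def using \<open>i < j\<close> by (intro exI[of _ i] exI[of _ "j - i"]) auto
qed

lemma ultimately_periodic_comp:
  "ultimately_periodic s \<Longrightarrow> ultimately_periodic (\<lambda>n. g (s n))"
  unfolding ultimately_periodic_def by metis

lemma ultimately_periodic_poly_word_poly_iterate:
  fixes \<phi> :: "nat \<Rightarrow> 'a::comm_ring_1"
  assumes \<sigma>: "p_uniform_morphism m p \<sigma>" and U: "set U \<subseteq> {..<m}"
    and "finite S" "0 \<in> S" "1 \<in> S"
    and add: "\<And>x y. x \<in> S \<Longrightarrow> y \<in> S \<Longrightarrow> x + y \<in> S"
    and mult: "\<And>x y. x \<in> S \<Longrightarrow> y \<in> S \<Longrightarrow> x * y \<in> S"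
    and "\<forall>a<m. \<phi> a \<in> S" "\<alpha> \<in> S"
  shows "ultimately_periodic (\<lambda>n. poly (word_poly (map \<phi> ((apply_morphism \<sigma> ^^ n) U))) \<alpha>)"
proof -
  define c where "c n a = poly (word_poly (map \<phi> ((apply_morphism \<sigma> ^^ n) [a]))) \<alpha>" for n a
  have \<sigma>_letters: "set (\<sigma> a) \<subseteq> {..<m}" if "a < m" for a
    using \<sigma> that by (auto simp: p_uniform_morphism_def)
  have c_mem: "c n a \<in> S" if "a < m" for n a
  proof -
    have "set (map \<phi> ((apply_morphism \<sigma> ^^ n) [a])) \<subseteq> S"
      using set_funpow_apply_morphism[OF \<sigma>, where w = "[a]" and n = n] that assms(8) by auto
    from poly_word_poly_closed[OF \<open>0 \<in> S\<close> add mult this \<open>\<alpha> \<in> S\<close>] show ?thesis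
      unfolding c_def .
  qed
  have power_mem: "x ^ k \<in> S" if "x \<in> S" for x k
    using that by (induct k) (auto intro: mult \<open>1 \<in> S\<close>)
  have c_Suc: "c (Suc n) a = poly (word_poly (map (c n) (\<sigma> a))) (\<alpha> ^ p ^ n)" if "a < m" for n a
    unfolding c_def funpow_apply_morphism_Suc_singleton
    using poly_word_poly_funpow_apply_morphism[OF \<sigma> \<sigma>_letters[OF that]] .
  define state where "state n = (map (c n) [0..<m], \<alpha> ^ p ^ n)" for n
  define read where "read cs b w = poly (word_poly (map ((!) cs) w)) b" for cs :: "'a list" and b w
  have read_state: "read (fst (state n)) (snd (state n)) w = poly (word_poly (map (c n) w)) (\<alpha> ^ p ^ n)"
    if "set w \<subseteq> {..<m}" for n w
    using that unfolding read_def state_def by (simp add: subset_iff cong: map_cong)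
  have "ultimately_periodic state"
  proof (rule ultimately_periodic_orbit)
    show "finite ({cs. set cs \<subseteq> S \<and> length cs = m} \<times> S)"
      using \<open>finite S\<close> by (simp add: finite_lists_length_eq)
    show "state n \<in> {cs. set cs \<subseteq> S \<and> length cs = m} \<times> S" for n
      unfolding state_def using c_mem power_mem[OF \<open>\<alpha> \<in> S\<close>] by auto
    show "state (Suc n) = (\<lambda>(cs, b). (map (\<lambda>a. read cs b (\<sigma> a)) [0..<m], b ^ p)) (state n)" for n
      using read_state[OF \<sigma>_letters] c_Suc
      by (auto simp: state_def power_Suc2 power_mult simp del: power_Suc)
  qed
  then have "ultimately_periodic (\<lambda>n. read (fst (state n)) (snd (state n)) U)"
    by (rule ultimately_periodic_comp)
  moreover have "poly (word_poly (map \<phi> ((apply_morphism \<sigma> ^^ n) U))) \<alpha>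
                   = read (fst (state n)) (snd (state n)) U" for n
    unfolding read_state[OF U] c_def by (rule poly_word_poly_funpow_apply_morphism[OF \<sigma> U])
  ultimately show ?thesis
    by simp
qed

lemma finite_power_fixed_points:
  assumes "n \<ge> 2"
  shows "finite {x::'a::idom. x ^ n = x}"
proof -
  let ?P = "monom (1::'a) n - monom 1 1"
  have "coeff ?P n = 1"
    using assms by simp
  then have "?P \<noteq> 0"
    by (metis coeff_0 zero_neq_one)
  then have "finite {x. poly ?P x = 0}"
    by (rule poly_roots_finite)
  then show ?thesis
    by (simp add: poly_monom)
qed

lemma power_power_eq_self: "x ^ b = x \<Longrightarrow> x ^ (b ^ k) = x"
  for x :: "'a::monoid_mult"
  by (induct k) (simp_all add: power_mult)

theorem proposition4p15:
  fixes p q m t :: nat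
    and U :: "nat list"
    and \<sigma> :: "nat \<Rightarrow> nat list"
    and \<phi> :: "nat \<Rightarrow> 'k::field"
    and \<alpha> :: "'k"
  assumes "prime p"
    and "CHAR('k) = p"
    and "\<exists>e\<ge>1. q = p ^ e"
    and "set U \<subseteq> {..<m}"
    and "p_uniform_morphism m p \<sigma>"
    and "\<forall>a<m. \<phi> a ^ q = \<phi> a"
    and "t \<ge> 1"
    and "\<alpha> ^ (p ^ t) = \<alpha>"
  shows "ultimately_periodic
           (\<lambda>n. poly (word_poly (map \<phi> ((apply_morphism \<sigma> ^^ n) U))) \<alpha>)"
proof -
  obtain e where "e \<ge> 1" "q = p ^ e"
    using assms(3) by auto
  define M where "M = p ^ (e * t)"
  have "p ^ 1 \<le> M"
    unfolding M_def using \<open>e \<ge> 1\<close> \<open>t \<ge> 1\<close> prime_gt_1_nat[OF assms(1)] by (intro power_increasing) auto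
  then have "M \<ge> 2"
    using prime_ge_2_nat[OF assms(1)] by simp
  define S :: "'k set" where "S = {x. x ^ M = x}"
  show ?thesis
  proof (rule ultimately_periodic_poly_word_poly_iterate[OF assms(5,4), where S = S])
    show "finite S"
      unfolding S_def using \<open>M \<ge> 2\<close> by (rule finite_power_fixed_points)
    show "x + y \<in> S" if "x \<in> S" "y \<in> S" for x y
      using that freshmans_dream'[of M "e * t" x y] assms(1,2) by (simp add: S_def M_def)
    show "x * y \<in> S" if "x \<in> S" "y \<in> S" for x y
      using that by (simp add: S_def power_mult_distrib)
    show "\<forall>a<m. \<phi> a \<in> S"
      using assms(6) power_power_eq_self[of _ q t] \<open>q = p ^ e\<close> by (auto simp: S_def M_def power_mult)
    show "\<alpha> \<in> S"
      using power_power_eq_self[OF assms(8), of e] by (simp add: S_def M_def mult.commute[of e] power_mult)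
  qed (use \<open>M \<ge> 2\<close> in \<open>auto simp: S_def\<close>)
qed

end
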